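(* Let $\lambda\in(0,1]$, $p$ a polynomial of degree $d\ge1$ with nonnegative real roots and largest root $R$. Then the function $\mathcal H(x)=\mathcal G(x)\big(\lambda\mathcal G(x)+\frac{1-\lambda}{x}\big)$, with $\mathcal G(x)=\frac1d\frac{xp'(x^2)}{p(x^2)}$, is a bijection from $(\sqrt R,+\infty)$ onto $(0,+\infty)$.
   Context: $\mathcal G$ is the Cauchy transform $\int\frac{d\mu(t)}{x-t}$ of the uniform measure $\mu$ on the $2d$ roots of $p(x^2)$, and $\mathcal H$ is the $\lambda$-rectangular Cauchy transform of $p(x^2)$. *)

theory Defs
  imports "HOL-Analysis.Analysis" "HOL-Computational_Algebra.Polynomial"
begin

text \<open>Cauchy transform of the uniform measure on the 2d roots of p(x^2):
  G(x) = (1/d) * x * p'(x^2) / p(x^2), where d = degree p.\<close>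
definition cauchyG :: "real poly \<Rightarrow> real \<Rightarrow> real" where
  "cauchyG p x = (1 / real (degree p)) * (x * poly (pderiv p) (x\<^sup>2) / poly p (x\<^sup>2))"

definition rectH :: "real \<Rightarrow> real poly \<Rightarrow> real \<Rightarrow> real" where
  "rectH lam p x = cauchyG p x * (lam * cauchyG p x + (1 - lam) / x)"

definition nonneg_real_rooted :: "real poly \<Rightarrow> bool" where
  "nonneg_real_rooted p \<longleftrightarrow>
     (\<forall>z::complex. poly (map_poly complex_of_real p) z = 0 \<longrightarrow> z \<in> \<real> \<and> 0 \<le> Re z)"

end

theory Submission
  imports Defs "HOL-Computational_Algebra.Fundamental_Theorem_Algebra"
begin

text \<open>Since all roots of \<open>p\<close> are real, \<open>p = c \<Prod>(x - r\<^sub>i)\<close> with \<open>0 \<le> r\<^sub>i \<le> R\<close>, and for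
  \<open>x > \<surd>R\<close> the logarithmic derivative gives \<open>G(x) = (1/d) \<Sum> x / (x\<^sup>2 - r\<^sub>i)\<close>. Every summand is
  positive and strictly decreasing there, hence so are \<open>G\<close> and \<open>H\<close>, and \<open>H\<close> is continuous. The
  summand with \<open>r\<^sub>i = R\<close> gives \<open>G(x) \<ge> 1 / (2d(x - \<surd>R))\<close>, so \<open>H \<ge> \<lambda>G\<^sup>2\<close> is unbounded near
  \<open>\<surd>R\<close>; and \<open>G(x) \<le> 2/x\<close> once \<open>x\<^sup>2 \<ge> 2R\<close>, so \<open>H(x) \<le> 4/x\<^sup>2\<close> tends to \<open>0\<close>. The
  intermediate value theorem finishes the proof.\<close>

lemma map_poly_of_real_mult:
  "map_poly (of_real :: real \<Rightarrow> 'a::{comm_ring_1,real_algebra_1}) (p * q)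
     = map_poly of_real p * map_poly of_real q"
  by (rule poly_eqI) (simp add: coeff_map_poly coeff_mult)

lemma poly_map_poly_of_real:
  "poly (map_poly (of_real :: real \<Rightarrow> 'a::{comm_ring_1,real_algebra_1}) p) (of_real x)
     = of_real (poly p x)"
  by (induction p) (auto simp: map_poly_pCons)

lemma poly_linear_factors:
  fixes y :: "'a::comm_ring_1"
  shows "poly (\<Prod>r\<leftarrow>rs. [:-r, 1:]) y = (\<Prod>r\<leftarrow>rs. y - r)"
  by (induction rs) (auto simp: algebra_simps)

lemma real_rooted_poly_splits:
  fixes p :: "real poly"
  assumes "\<And>z::complex. poly (map_poly of_real p) z = 0 \<Longrightarrow> z \<in> \<real>"
  shows "\<exists>rs. p = smult (lead_coeff p) (\<Prod>r\<leftarrow>rs. [:-r, 1:]) \<and> length rs = degree p"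
  using assms
proof (induction "degree p" arbitrary: p)
  case 0
  then obtain c where "p = [:c:]" by (metis degree_eq_zeroE)
  then show ?case by (intro exI[of _ "[]"]) auto
next
  case (Suc n)
  let ?P = "map_poly (of_real :: real \<Rightarrow> complex) p"
  have "\<not> constant (poly ?P)"
    using Suc.hyps(2) by (simp add: constant_degree degree_map_poly)
  then obtain z where "poly ?P z = 0" using fundamental_theorem_of_algebra by blast
  moreover from this obtain r where "z = of_real r" using Suc.prems Reals_cases by blast
  ultimately have "poly p r = 0" by (simp add: poly_map_poly_of_real)
  then obtain q where pq: "p = [:-r, 1:] * q" by (metis dvdE poly_eq_0_iff_dvd)
  with Suc.hyps(2) have "q \<noteq> 0" by auto
  then have "degree p = Suc (degree q)"
    unfolding pq by (subst degree_mult_eq) auto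
  with Suc.hyps(2) have "degree q = n" by simp
  moreover have "w \<in> \<real>" if "poly (map_poly of_real q) w = 0" for w :: complex
  proof -
    have "poly ?P w = 0" unfolding pq map_poly_of_real_mult using that by simp
    then show ?thesis by (rule Suc.prems)
  qed
  ultimately obtain rs where rs: "q = smult (lead_coeff q) (\<Prod>r\<leftarrow>rs. [:-r, 1:])" "length rs = n"
    using Suc.hyps(1) by metis
  have lc: "lead_coeff p = lead_coeff q"
    unfolding pq lead_coeff_mult by simp
  have "p = smult (lead_coeff q) ([:-r, 1:] * (\<Prod>r\<leftarrow>rs. [:-r, 1:]))"
    using pq rs(1) by (metis mult_smult_right)
  then have "p = smult (lead_coeff p) (\<Prod>x\<leftarrow>r # rs. [:-x, 1:])"
    unfolding lc list.map prod_list.Cons .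
  with rs(2) Suc.hyps(2) show ?case by (metis length_Cons)
qed

lemma nonneg_real_rooted_splits:
  assumes "nonneg_real_rooted p"
  obtains rs where "p = smult (lead_coeff p) (\<Prod>r\<leftarrow>rs. [:-r, 1:])" "length rs = degree p"
    "\<forall>r\<in>set rs. 0 \<le> r"
proof -
  from assms obtain rs where rs: "p = smult (lead_coeff p) (\<Prod>r\<leftarrow>rs. [:-r, 1:])" "length rs = degree p"
    using real_rooted_poly_splits unfolding nonneg_real_rooted_def by blast
  have "0 \<le> r" if "r \<in> set rs" for r
  proof (cases "p = 0")
    case False
    then have "poly p r = 0"
      using that by (subst rs(1)) (auto simp: poly_linear_factors prod_list_zero_iff)
    then show ?thesis
      using assms poly_map_poly_of_real[of p r] unfolding nonneg_real_rooted_def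
      by (metis Re_complex_of_real of_real_0)
  qed (use rs that in auto)
  with rs show ?thesis using that by blast
qed

lemma poly_pderiv_linear_factors:
  fixes y :: "'a::field"
  assumes "y \<notin> set rs"
  shows "poly (pderiv (\<Prod>r\<leftarrow>rs. [:-r, 1:])) y
           = poly (\<Prod>r\<leftarrow>rs. [:-r, 1:]) y * (\<Sum>r\<leftarrow>rs. 1 / (y - r))"
  using assms
proof (induction rs)
  case (Cons a rs)
  define Q where "Q = (\<Prod>r\<leftarrow>rs. [:-r, 1:])"
  have "pderiv [:-a, 1:] = 1" by (simp add: pderiv_pCons)
  then have "poly (pderiv ([:-a, 1:] * Q)) y = (y - a) * poly (pderiv Q) y + poly Q y"
    by (simp add: pderiv_mult del: mult_pCons_left)
  also have "\<dots> = (y - a) * poly Q y * (1 / (y - a) + (\<Sum>r\<leftarrow>rs. 1 / (y - r)))"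
    using Cons by (simp add: Q_def field_simps)
  finally show ?case by (simp add: Q_def del: mult_pCons_left)
qed simp

text \<open>Since \<open>1/(x - \<surd>r) + 1/(x + \<surd>r) = 2x/(x\<^sup>2 - r)\<close>, this is the Cauchy transform of the
  uniform measure on the \<open>\<plusminus>\<surd>r\<close>, \<open>r \<in> rs\<close>.\<close>
definition cauchy_roots :: "real list \<Rightarrow> real \<Rightarrow> real" where
  "cauchy_roots rs x = (\<Sum>r\<leftarrow>rs. x / (x\<^sup>2 - r)) / real (length rs)"

lemma cauchy_roots_pos:
  assumes "rs \<noteq> []" "0 < x" "\<And>r. r \<in> set rs \<Longrightarrow> r < x\<^sup>2"
  shows "0 < cauchy_roots rs x"
proof -
  have "(\<Sum>r\<leftarrow>rs. 0) < (\<Sum>r\<leftarrow>rs. x / (x\<^sup>2 - r))"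
    using assms by (intro sum_list_strict_mono) auto
  with assms(1) show ?thesis by (simp add: cauchy_roots_def)
qed

lemma root_term_strict_decreasing:
  fixes r x y :: real
  assumes "0 \<le> r" "0 < x" "r < x\<^sup>2" "x < y"
  shows "y / (y\<^sup>2 - r) < x / (x\<^sup>2 - r)"
proof -
  have "x\<^sup>2 < y\<^sup>2" using assms by (simp add: power_strict_mono)
  with assms have "r < y\<^sup>2" by linarith
  moreover have "y * (x\<^sup>2 - r) < x * (y\<^sup>2 - r)"
  proof -
    have "0 < (x * y + r) * (y - x)" using assms by (intro mult_pos_pos add_pos_nonneg) auto
    then show ?thesis by (simp add: power2_eq_square algebra_simps)
  qed
  ultimately show ?thesis using assms by (simp add: field_simps)
qed

lemma cauchy_roots_strict_decreasing:
  assumes "rs \<noteq> []" "0 < x" "x < y" "\<And>r. r \<in> set rs \<Longrightarrow> 0 \<le> r \<and> r < x\<^sup>2"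
  shows "cauchy_roots rs y < cauchy_roots rs x"
proof -
  have "(\<Sum>r\<leftarrow>rs. y / (y\<^sup>2 - r)) < (\<Sum>r\<leftarrow>rs. x / (x\<^sup>2 - r))"
    using assms by (intro sum_list_strict_mono root_term_strict_decreasing) auto
  with assms(1) show ?thesis by (simp add: cauchy_roots_def divide_strict_right_mono)
qed

lemma cauchy_roots_ge_largest_root:
  assumes "s\<^sup>2 \<in> set rs" "0 \<le> s" "s < x" "\<And>r. r \<in> set rs \<Longrightarrow> r \<le> s\<^sup>2"
  shows "1 / (2 * real (length rs) * (x - s)) \<le> cauchy_roots rs x"
proof -
  have "1 / 2 \<le> x / (x + s)" using assms by (simp add: field_simps)
  then have "(1 / 2) / (x - s) \<le> (x / (x + s)) / (x - s)"
    using assms by (intro divide_right_mono) auto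
  then have "1 / (2 * (x - s)) \<le> x / ((x - s) * (x + s))" by (simp add: mult.commute)
  also have "\<dots> = x / (x\<^sup>2 - s\<^sup>2)" by (simp add: power2_eq_square algebra_simps)
  also have "\<dots> \<le> (\<Sum>r\<leftarrow>rs. x / (x\<^sup>2 - r))"
  proof (rule member_le_sum_list)
    fix t assume "t \<in> set (map (\<lambda>r. x / (x\<^sup>2 - r)) rs)"
    then obtain r where r: "r \<in> set rs" "t = x / (x\<^sup>2 - r)" by auto
    have "s\<^sup>2 < x\<^sup>2" using assms by (simp add: power_strict_mono)
    with assms(4)[OF r(1)] have "0 < x\<^sup>2 - r" by linarith
    with assms(2,3) r(2) show "0 \<le> t" by simp
  qed (use assms(1) in \<open>simp add: rev_image_eqI\<close>)
  finally have "1 / (2 * (x - s)) / real (length rs) \<le> cauchy_roots rs x"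
    unfolding cauchy_roots_def by (rule divide_right_mono) simp
  then show ?thesis by (simp add: algebra_simps)
qed

lemma cauchy_roots_le_two_div:
  assumes "0 < x" "\<And>r. r \<in> set rs \<Longrightarrow> 2 * r \<le> x\<^sup>2"
  shows "cauchy_roots rs x \<le> 2 / x"
proof -
  have "x / (x\<^sup>2 - r) \<le> 2 / x" if "r \<in> set rs" for r
  proof -
    have "0 < x\<^sup>2" using assms(1) by simp
    moreover have "2 * r \<le> x\<^sup>2" using assms(2) that .
    ultimately have "0 < x\<^sup>2 - r" by linarith
    moreover from \<open>2 * r \<le> x\<^sup>2\<close> have "x\<^sup>2 \<le> 2 * (x\<^sup>2 - r)" by (simp add: algebra_simps)
    ultimately show ?thesis using assms(1) by (simp add: field_simps power2_eq_square)
  qed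
  then have "(\<Sum>r\<leftarrow>rs. x / (x\<^sup>2 - r)) \<le> (\<Sum>r\<leftarrow>rs. 2 / x)" by (rule sum_list_mono)
  then show ?thesis using assms(1)
    by (cases "rs = []") (auto simp: cauchy_roots_def sum_list_triv field_simps)
qed

lemma continuous_strict_decreasing_bij_betw:
  fixes f :: "real \<Rightarrow> real"
  assumes cont: "continuous_on {a<..} f"
    and decr: "\<And>x y. a < x \<Longrightarrow> x < y \<Longrightarrow> f y < f x"
    and pos: "\<And>x. a < x \<Longrightarrow> 0 < f x"
    and large: "\<And>t. 0 < t \<Longrightarrow> \<exists>x>a. t \<le> f x"
    and small: "\<And>t. 0 < t \<Longrightarrow> \<exists>x>a. f x \<le> t"
  shows "bij_betw f {a<..} {0<..}"
proof (rule bij_betw_imageI)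
  show "inj_on f {a<..}"
  proof (rule inj_onI)
    fix x y assume "x \<in> {a<..}" "y \<in> {a<..}" "f x = f y"
    then show "x = y" using decr by (metis greaterThan_iff less_irrefl linorder_neqE_linordered_idom)
  qed
  have "t \<in> f ` {a<..}" if "0 < t" for t
  proof -
    obtain x1 x2 where x1: "a < x1" "t \<le> f x1" and x2: "a < x2" "f x2 \<le> t"
      using large small \<open>0 < t\<close> by blast
    have "x1 \<le> x2"
    proof (rule ccontr)
      assume "\<not> x1 \<le> x2"
      then have "f x1 < f x2" using decr x2(1) by simp
      with x1 x2 show False by linarith
    qed
    moreover have "continuous_on {x1..x2} f"
      using cont by (rule continuous_on_subset) (use x1 in auto)
    ultimately obtain x where "x1 \<le> x" "f x = t"
      using IVT2'[of f x2 t x1] x1 x2 by blast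
    with x1 show ?thesis by force
  qed
  with pos show "f ` {a<..} = {0<..}" by fastforce
qed

lemma rect_factor_pos:
  fixes g x lam :: real
  assumes "0 < g" "0 < x" "0 \<le> lam" "lam \<le> 1"
  shows "0 < lam * g + (1 - lam) / x"
  using assms by (cases "lam = 0") (auto intro: add_pos_nonneg)

lemma rect_strict_decreasing:
  fixes g g' x y lam :: real
  assumes "0 < g'" "g' < g" "0 < x" "x \<le> y" "0 \<le> lam" "lam \<le> 1"
  shows "g' * (lam * g' + (1 - lam) / y) < g * (lam * g + (1 - lam) / x)"
proof -
  have "(1 - lam) / y \<le> (1 - lam) / x"
    using assms by (intro divide_left_mono) auto
  moreover have "lam * g' \<le> lam * g" using assms by (simp add: mult_left_mono)
  ultimately have "lam * g' + (1 - lam) / y \<le> lam * g + (1 - lam) / x" by linarith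
  moreover have "0 < lam * g' + (1 - lam) / y"
    using assms by (intro rect_factor_pos) auto
  ultimately show ?thesis using assms by (intro mult_less_le_imp_less) auto
qed

lemma rect_ge_square:
  fixes g x lam :: real
  assumes "0 \<le> g" "0 < x" "lam \<le> 1"
  shows "lam * g\<^sup>2 \<le> g * (lam * g + (1 - lam) / x)"
proof -
  have "0 \<le> g * ((1 - lam) / x)" using assms by simp
  then show ?thesis by (simp add: power2_eq_square algebra_simps)
qed

lemma rect_le_four_div_square:
  fixes g x lam :: real
  assumes "0 \<le> g" "g \<le> 2 / x" "0 < x" "0 \<le> lam" "lam \<le> 1"
  shows "g * (lam * g + (1 - lam) / x) \<le> 4 / x\<^sup>2"
proof -
  have "lam * g + (1 - lam) / x \<le> lam * (2 / x) + (1 - lam) * (2 / x)"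
    using assms by (intro add_mono mult_left_mono) (auto simp: divide_simps)
  also have "\<dots> = 2 / x" using assms(3) by (simp add: field_simps)
  finally have "g * (lam * g + (1 - lam) / x) \<le> (2 / x) * (2 / x)"
    using assms by (intro mult_mono) (auto intro: rect_factor_pos[of g x lam])
  then show ?thesis by (simp add: power2_eq_square)
qed

context
  fixes p :: "real poly" and rs :: "real list" and R :: real
  assumes p_split: "p = smult (lead_coeff p) (\<Prod>r\<leftarrow>rs. [:-r, 1:])"
    and degree_p: "degree p = length rs"
    and roots_nonneg: "\<forall>r\<in>set rs. 0 \<le> r"
    and R_root: "R \<in> set rs"
    and R_max: "\<forall>r\<in>set rs. r \<le> R"
begin

lemma roots_nonempty: "rs \<noteq> []"
  using R_root by auto

lemma R_nonneg: "0 \<le> R"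
  using R_root roots_nonneg by blast

lemma lead_coeff_nonzero: "lead_coeff p \<noteq> 0"
proof -
  have "degree p \<noteq> 0" using roots_nonempty degree_p by simp
  then show ?thesis by auto
qed

lemma roots_below_square:
  assumes "sqrt R < x"
  shows "0 < x" and "\<And>r. r \<in> set rs \<Longrightarrow> 0 \<le> r \<and> r < x\<^sup>2"
proof -
  show "0 < x" using assms real_sqrt_ge_zero[OF R_nonneg] by linarith
  have "R < x\<^sup>2"
    using assms R_nonneg power_strict_mono[of "sqrt R" x 2] by simp
  then show "0 \<le> r \<and> r < x\<^sup>2" if "r \<in> set rs" for r
    using that roots_nonneg R_max by fastforce
qed

lemma cauchyG_eq_cauchy_roots:
  assumes "sqrt R < x"
  shows "cauchyG p x = cauchy_roots rs x"
proof -
  define c where "c = lead_coeff p"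
  define Q where "Q = (\<Prod>r\<leftarrow>rs. [:-r, 1:])"
  have "c \<noteq> 0" using lead_coeff_nonzero by (simp add: c_def)
  have "x\<^sup>2 \<notin> set rs" using roots_below_square[OF assms] by blast
  then have "poly Q (x\<^sup>2) \<noteq> 0" by (auto simp: Q_def poly_linear_factors prod_list_zero_iff)
  have "x * poly (pderiv p) (x\<^sup>2) / poly p (x\<^sup>2)
        = x * (c * poly Q (x\<^sup>2) * (\<Sum>r\<leftarrow>rs. 1 / (x\<^sup>2 - r))) / (c * poly Q (x\<^sup>2))"
    using p_split poly_pderiv_linear_factors[OF \<open>x\<^sup>2 \<notin> set rs\<close>]
    by (simp add: c_def [symmetric] Q_def [symmetric] pderiv_smult)
  also have "\<dots> = x * (\<Sum>r\<leftarrow>rs. 1 / (x\<^sup>2 - r))"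
    using \<open>c \<noteq> 0\<close> \<open>poly Q (x\<^sup>2) \<noteq> 0\<close> by simp
  also have "\<dots> = (\<Sum>r\<leftarrow>rs. x / (x\<^sup>2 - r))"
    by (simp add: sum_list_const_mult [symmetric])
  finally show ?thesis by (simp add: cauchyG_def cauchy_roots_def degree_p)
qed

lemma rectH_eq_cauchy_roots:
  assumes "sqrt R < x"
  shows "rectH lam p x = cauchy_roots rs x * (lam * cauchy_roots rs x + (1 - lam) / x)"
  unfolding rectH_def cauchyG_eq_cauchy_roots[OF assms] ..

lemma continuous_on_rectH: "continuous_on {sqrt R<..} (rectH lam p)"
proof -
  have "poly p (x\<^sup>2) \<noteq> 0" and "x \<noteq> 0" if "sqrt R < x" for x
  proof -
    show "x \<noteq> 0" using roots_below_square(1)[OF that] by simp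
    have "x\<^sup>2 \<notin> set rs" using roots_below_square(2)[OF that] by blast
    with lead_coeff_nonzero show "poly p (x\<^sup>2) \<noteq> 0"
      by (subst p_split) (auto simp: poly_linear_factors prod_list_zero_iff)
  qed
  then show ?thesis
    unfolding rectH_def cauchyG_def by (intro continuous_intros) auto
qed

lemma rectH_pos:
  assumes "0 \<le> lam" "lam \<le> 1" "sqrt R < x"
  shows "0 < rectH lam p x"
  using roots_below_square[OF assms(3)] assms roots_nonempty
  by (auto simp: rectH_eq_cauchy_roots intro!: mult_pos_pos rect_factor_pos cauchy_roots_pos)

lemma rectH_strict_decreasing:
  assumes "0 \<le> lam" "lam \<le> 1" "sqrt R < x" "x < y"
  shows "rectH lam p y < rectH lam p x"
proof -
  note below = roots_below_square[OF assms(3)]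
  have "cauchy_roots rs y < cauchy_roots rs x"
    using below assms(4) roots_nonempty by (intro cauchy_roots_strict_decreasing) auto
  moreover have "0 < cauchy_roots rs y"
    using roots_below_square[of y] assms(3,4) roots_nonempty by (intro cauchy_roots_pos) auto
  ultimately show ?thesis
    using assms below by (simp add: rectH_eq_cauchy_roots rect_strict_decreasing)
qed

lemma rectH_unbounded:
  assumes "0 < lam" "lam \<le> 1" "0 < t"
  shows "\<exists>x>sqrt R. t \<le> rectH lam p x"
proof -
  define d where "d = real (length rs)"
  have "0 < d" using roots_nonempty by (simp add: d_def)
  define e where "e = sqrt (lam / t) / (2 * d)"
  have "0 < e" using assms \<open>0 < d\<close> by (simp add: e_def)
  define x where "x = sqrt R + e"
  have "sqrt R < x" using \<open>0 < e\<close> by (simp add: x_def)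
  have "t = lam * (1 / (2 * d * e))\<^sup>2"
    using assms \<open>0 < d\<close> by (simp add: e_def field_simps)
  also have "\<dots> \<le> lam * (cauchy_roots rs x)\<^sup>2"
    using cauchy_roots_ge_largest_root[of "sqrt R" rs x] \<open>0 < e\<close> \<open>0 < d\<close>
      R_nonneg R_root R_max assms
    by (intro mult_left_mono power_mono) (auto simp: x_def d_def)
  also have "\<dots> \<le> rectH lam p x"
    using roots_below_square[OF \<open>sqrt R < x\<close>] roots_nonempty assms
    by (simp add: rectH_eq_cauchy_roots[OF \<open>sqrt R < x\<close>] rect_ge_square
        cauchy_roots_pos less_imp_le)
  finally show ?thesis using \<open>sqrt R < x\<close> by blast
qed

lemma rectH_arbitrarily_small:
  assumes "0 \<le> lam" "lam \<le> 1" "0 < t"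
  shows "\<exists>x>sqrt R. rectH lam p x \<le> t"
proof -
  define x where "x = sqrt (2 * R + 4 / t)"
  have "sqrt R < x" using R_nonneg assms by (simp add: x_def add_nonneg_pos)
  have x2: "x\<^sup>2 = 2 * R + 4 / t" using R_nonneg assms by (simp add: x_def)
  note below = roots_below_square[OF \<open>sqrt R < x\<close>]
  have "0 < 4 / t" using assms by simp
  then have "2 * r \<le> x\<^sup>2" if "r \<in> set rs" for r
    using R_max[rule_format, OF that] unfolding x2 by linarith
  then have "cauchy_roots rs x \<le> 2 / x"
    using below(1) by (rule cauchy_roots_le_two_div[rotated])
  then have "rectH lam p x \<le> 4 / x\<^sup>2"
    using below roots_nonempty assms
    by (simp add: rectH_eq_cauchy_roots[OF \<open>sqrt R < x\<close>] rect_le_four_div_square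
        cauchy_roots_pos less_imp_le)
  also have "\<dots> \<le> t"
  proof -
    have "4 / t \<le> x\<^sup>2" using x2 R_nonneg by simp
    then show ?thesis using below(1) assms by (simp add: field_simps)
  qed
  finally show ?thesis using \<open>sqrt R < x\<close> by blast
qed

lemma bij_betw_rectH:
  assumes "0 < lam" "lam \<le> 1"
  shows "bij_betw (rectH lam p) {sqrt R<..} {0<..}"
  using assms
  by (intro continuous_strict_decreasing_bij_betw continuous_on_rectH rectH_strict_decreasing
      rectH_pos rectH_unbounded rectH_arbitrarily_small) auto

end

theorem mainTheorem16:
  fixes lam :: real and p :: "real poly" and R :: real
  assumes "0 < lam" and "lam \<le> 1"
    and "degree p \<ge> 1"
    and "nonneg_real_rooted p"
    and "R = Max {r. poly p r = 0}"
  shows "bij_betw (rectH lam p) {sqrt R<..} {0<..}"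
proof -
  obtain rs where split: "p = smult (lead_coeff p) (\<Prod>r\<leftarrow>rs. [:-r, 1:])"
    and len: "length rs = degree p" and nonneg: "\<forall>r\<in>set rs. 0 \<le> r"
    using nonneg_real_rooted_splits[OF assms(4)] .
  have "p \<noteq> 0" using assms(3) by auto
  then have "{r. poly p r = 0} = set rs"
    by (subst split) (auto simp: poly_linear_factors prod_list_zero_iff)
  moreover have "rs \<noteq> []" using len assms(3) by auto
  ultimately have "R \<in> set rs" and "\<forall>r\<in>set rs. r \<le> R" using assms(5) by auto
  then show ?thesis by (rule bij_betw_rectH[OF split len[symmetric] nonneg _ _ assms(1,2)])
qed

end
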